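(* Let $R$ be a regular ring with unity, let $E$ be its set of idempotents, and let $e,f\in E$. Then $\mathcal L(e)$ and $\mathcal L(f)$ are in perspective in the lattice $L(E)=E/\mathcal L$ if and only if $1\le d_l(e,f)\le 3$.
   Context: A ring is regular if for every $x$ there is $y$ with $xyx=x$. On $E$: $e\,\omega^l\,f$ iff $ef=e$; $e\,\omega^r\,f$ iff $fe=e$; $\mathcal L=\omega^l\cap(\omega^l)^{-1}$, $\mathcal R=\omega^r\cap(\omega^r)^{-1}$ (so $e\,\mathcal L\,f$ iff $Re=Rf$, $e\,\mathcal R\,f$ iff $eR=fR$), with classes $\mathcal L(e)$. $E/\mathcal L$ is ordered by $\mathcal L(e)\le\mathcal L(f)$ iff $e\,\omega^l\,f$; it is isomorphic to the lattice of principal left ideals of $R$ (a complemented modular lattice with least element $\mathcal L(0)$, greatest element $\mathcal L(1)$). Two elements of a lattice are in perspective if they have a common complement. An $E$-sequence of length $m\ge1$ from $e$ to $f$ is a sequence $e=x_0,\dots,x_m=f$ in $E$ with $x_{i-1}\,(\mathcal L\cup\mathcal R)\,x_i$ for each $i$; $d_l(e,f)$ is the least length of an $E$-sequence from $e$ to $f$ with $x_0\,\mathcal L\,x_1$, and $d_l(e,f)=0$ if none exists. *)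

theory Defs
  imports Main
begin

definition regular_ring :: "'a::ring_1 itself \<Rightarrow> bool" where
  "regular_ring _ \<longleftrightarrow> (\<forall>x::'a. \<exists>y. x * y * x = x)"

definition idem :: "'a::ring_1 set" where
  "idem = {e. e * e = e}"

definition omega_l :: "'a::ring_1 \<Rightarrow> 'a \<Rightarrow> bool" where
  "omega_l e f \<longleftrightarrow> e * f = e"

definition omega_r :: "'a::ring_1 \<Rightarrow> 'a \<Rightarrow> bool" where
  "omega_r e f \<longleftrightarrow> f * e = e"

definition L_rel :: "'a::ring_1 \<Rightarrow> 'a \<Rightarrow> bool" where
  "L_rel e f \<longleftrightarrow> omega_l e f \<and> omega_l f e"

definition R_rel :: "'a::ring_1 \<Rightarrow> 'a \<Rightarrow> bool" where
  "R_rel e f \<longleftrightarrow> omega_r e f \<and> omega_r f e"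

definition L_class :: "'a::ring_1 \<Rightarrow> 'a set" where
  "L_class e = {f \<in> idem. L_rel e f}"

definition EL :: "'a::ring_1 set set" where
  "EL = L_class ` idem"

definition EL_le :: "'a::ring_1 set \<Rightarrow> 'a set \<Rightarrow> bool" where
  "EL_le X Y \<longleftrightarrow> (\<exists>e f. e \<in> idem \<and> f \<in> idem \<and> X = L_class e \<and> Y = L_class f \<and> omega_l e f)"

text \<open>Complements in the lattice E/L (bottom L(0), top L(1)):
  X meet Y = L(0) and X join Y = L(1), expressed via lower/upper bounds.\<close>
definition EL_compl :: "'a::ring_1 set \<Rightarrow> 'a set \<Rightarrow> bool" where
  "EL_compl X Y \<longleftrightarrow> X \<in> EL \<and> Y \<in> EL \<and>
     (\<forall>Z\<in>EL. EL_le Z X \<and> EL_le Z Y \<longrightarrow> EL_le Z (L_class 0)) \<and>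
     (\<forall>Z\<in>EL. EL_le X Z \<and> EL_le Y Z \<longrightarrow> EL_le (L_class 1) Z)"

definition in_perspective :: "'a::ring_1 set \<Rightarrow> 'a set \<Rightarrow> bool" where
  "in_perspective X Y \<longleftrightarrow> (\<exists>Z\<in>EL. EL_compl X Z \<and> EL_compl Y Z)"

definition E_seq_l :: "'a::ring_1 \<Rightarrow> 'a \<Rightarrow> nat \<Rightarrow> bool" where
  "E_seq_l e f m \<longleftrightarrow> m \<ge> 1 \<and> (\<exists>x :: nat \<Rightarrow> 'a.
     x 0 = e \<and> x m = f \<and> (\<forall>i\<le>m. x i \<in> idem) \<and>
     (\<forall>i\<in>{1..m}. L_rel (x (i - 1)) (x i) \<or> R_rel (x (i - 1)) (x i)) \<and>
     L_rel (x 0) (x 1))"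

definition d_l :: "'a::ring_1 \<Rightarrow> 'a \<Rightarrow> nat" where
  "d_l e f = (if \<exists>m. E_seq_l e f m then LEAST m. E_seq_l e f m else 0)"

end

theory Submission
  imports Defs
begin

(* In a regular ring every principal left ideal and every sum Re + Rg is generated by an
   idempotent, so complementary L(e), L(g) give R = Re \<oplus> Rg.  Writing 1 = a + (1 - a) with
   a in Re and 1 - a in Rg shows that every complement of L(e) is L(1 - a) for an idempotent a
   with e L a, and L(1 - a) = L(1 - b) exactly when a R b.  Hence L(e) and L(f) are in
   perspective iff e L a R b L f for some idempotents a, b, i.e. iff there is an E-sequence of
   length 3 starting with an L-step; shorter ones can be padded. *)

lemma L_rel_iff: "L_rel e f \<longleftrightarrow> e * f = e \<and> f * e = f"
  by (auto simp: L_rel_def omega_l_def)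

lemma R_rel_iff: "R_rel e f \<longleftrightarrow> f * e = e \<and> e * f = f"
  by (auto simp: R_rel_def omega_r_def)

lemma L_rel_refl: "e \<in> idem \<Longrightarrow> L_rel e e"
  by (simp add: L_rel_iff idem_def)

lemma R_rel_refl: "e \<in> idem \<Longrightarrow> R_rel e e"
  by (simp add: R_rel_iff idem_def)

lemma L_rel_sym: "L_rel e f \<Longrightarrow> L_rel f e"
  by (auto simp: L_rel_iff)

lemma L_rel_trans: "L_rel e f \<Longrightarrow> L_rel f g \<Longrightarrow> L_rel e g"
  unfolding L_rel_iff by (metis mult.assoc)

lemma R_rel_trans: "R_rel e f \<Longrightarrow> R_rel f g \<Longrightarrow> R_rel e g"
  unfolding R_rel_iff by (metis mult.assoc)

lemma L_rel_one_minus_iff: "L_rel (1 - a) (1 - b) \<longleftrightarrow> R_rel a b"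
  by (auto simp: L_rel_iff R_rel_iff algebra_simps)

lemma zero_idem: "0 \<in> idem" and one_idem: "1 \<in> idem"
  by (simp_all add: idem_def)

lemma one_minus_idem: "a \<in> idem \<Longrightarrow> 1 - a \<in> idem"
  by (simp add: idem_def algebra_simps)

lemma L_class_eq: "L_rel e f \<Longrightarrow> L_class e = L_class f"
  unfolding L_class_def by (auto intro: L_rel_trans L_rel_sym)

lemma L_class_in_EL: "e \<in> idem \<Longrightarrow> L_class e \<in> EL"
  by (simp add: EL_def)

lemma EL_le_L_class_iff:
  assumes "e \<in> idem" "f \<in> idem"
  shows "EL_le (L_class e) (L_class f) \<longleftrightarrow> e * f = e"
proof
  assume "EL_le (L_class e) (L_class f)"
  then obtain e' f' where "L_class e = L_class e'" "L_class f = L_class f'" "e' * f' = e'"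
    by (auto simp: EL_le_def omega_l_def)
  moreover have "e \<in> L_class e" "f \<in> L_class f"
    using assms by (simp_all add: L_class_def L_rel_refl)
  ultimately have "e * e' = e" "f' * f = f'" "e' * f' = e'"
    by (auto simp: L_class_def L_rel_iff)
  then show "e * f = e"
    by (metis mult.assoc)
qed (use assms in \<open>auto simp: EL_le_def omega_l_def\<close>)

lemma EL_compl_L_class_iff:
  assumes "e \<in> idem" "g \<in> idem"
  shows "EL_compl (L_class e) (L_class g) \<longleftrightarrow>
    (\<forall>z\<in>idem. z * e = z \<and> z * g = z \<longrightarrow> z = 0) \<and> (\<forall>h\<in>idem. e * h = e \<and> g * h = g \<longrightarrow> h = 1)"
  using assms zero_idem one_idem
  by (auto simp: EL_compl_def EL_def EL_le_L_class_iff)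

lemma regular_ring_idem_generator:
  fixes x :: "'a::ring_1"
  assumes "regular_ring TYPE('a)"
  obtains p w :: 'a where "p \<in> idem" "x * p = x" "p = w * x"
proof -
  obtain w where w: "x * w * x = x"
    using assms unfolding regular_ring_def by blast
  then have "w * x \<in> idem" "x * (w * x) = x"
    by (simp_all add: idem_def) (metis mult.assoc)+
  then show thesis
    using that by blast
qed

lemma regular_ring_meet_zero:
  fixes x :: "'a::ring_1"
  assumes "regular_ring TYPE('a)"
    and meet: "\<forall>z\<in>idem. z * e = z \<and> z * g = z \<longrightarrow> z = 0"
    and "x * e = x" "x * g = x"
  shows "x = 0"
proof -
  obtain p w where p: "p \<in> idem" "x * p = x" "p = w * x"
    using regular_ring_idem_generator assms(1) by blast
  have "p * e = p" "p * g = p"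
    using p(3) assms(3,4) by (simp_all add: mult.assoc)
  then have "p = 0"
    using meet p(1) by blast
  then show ?thesis
    using p(2) by simp
qed

text \<open>\<open>Re + Rg = Rh\<close> for an idempotent \<open>h\<close>: with \<open>Rp = R g(1 - e)\<close>, take \<open>h = e + (1 - e) p\<close>.\<close>

lemma regular_ring_idem_join:
  fixes e g :: "'a::ring_1"
  assumes "regular_ring TYPE('a)" "e \<in> idem"
  obtains h s t where "h \<in> idem" "e * h = e" "g * h = g" "h = s * e + t * g"
proof -
  define y where "y = g * (1 - e)"
  obtain p w where p: "p \<in> idem" "y * p = y" "p = w * y"
    using regular_ring_idem_generator assms(1) by blast
  have ee: "e * e = e" and pp: "p * p = p"
    using assms(2) p(1) by (simp_all add: idem_def)
  have pe: "p * e = 0"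
    unfolding p(3) y_def using ee by (simp add: algebra_simps)
  define u where "u = (1 - e) * p"
  have "e * (1 - e) = 0"
    using ee by (simp add: algebra_simps)
  then have eu: "e * u = 0"
    unfolding u_def by (metis mult.assoc mult_zero_left)
  have ue: "u * e = 0"
    unfolding u_def using pe by (simp add: mult.assoc)
  have "p * (1 - e) = p"
    using pe by (simp add: algebra_simps)
  then have "u * u = u"
    unfolding u_def using pp by (metis mult.assoc)
  then have "e + u \<in> idem"
    using ee eu ue by (simp add: idem_def algebra_simps)
  moreover have eh: "e * (e + u) = e"
    using ee eu by (simp add: algebra_simps)
  moreover have "g * (e + u) = g"
  proof -
    have ye: "y * e = 0"
      unfolding y_def using ee by (simp add: algebra_simps)
    then have "y * (1 - e) = y"
      by (simp add: algebra_simps)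
    then have "y * u = y"
      unfolding u_def using p(2) by (metis mult.assoc)
    then have "y * (e + u) = y"
      using ye by (simp add: distrib_left)
    moreover have "g = g * e + y"
      unfolding y_def by (simp add: algebra_simps)
    ultimately show ?thesis
      using eh by (metis distrib_right mult.assoc)
  qed
  moreover have "e + u = (1 - (1 - e) * w * g) * e + (1 - e) * w * g"
    unfolding u_def p(3) y_def by (simp add: algebra_simps)
  ultimately show thesis
    using that by blast
qed

text \<open>Here \<open>a \<in> Re\<close> and \<open>1 - a \<in> Rg\<close>; each identity follows by exhibiting an element
  of \<open>Re \<inter> Rg\<close>.\<close>

lemma direct_sum_decomposition:
  fixes e g a :: "'a::ring_1"
  assumes meet: "\<And>x. x * e = x \<Longrightarrow> x * g = x \<Longrightarrow> x = 0"
    and ee: "e * e = e" and gg: "g * g = g"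
    and ae: "a * e = a" and ag: "(1 - a) * g = 1 - a"
  shows "a \<in> idem" "L_rel e a" "L_rel (1 - a) g"
proof -
  have "a * (1 - a) = 0"
  proof (rule meet)
    show "a * (1 - a) * e = a * (1 - a)"
      using ae by (simp add: algebra_simps mult.assoc)
    show "a * (1 - a) * g = a * (1 - a)"
      using ag by (simp add: mult.assoc)
  qed
  then show "a \<in> idem"
    by (simp add: idem_def algebra_simps)
  have "e * (1 - a) = 0"
  proof (rule meet)
    show "e * (1 - a) * e = e * (1 - a)"
      using ae ee by (simp add: algebra_simps mult.assoc)
    show "e * (1 - a) * g = e * (1 - a)"
      using ag by (simp add: mult.assoc)
  qed
  then show "L_rel e a"
    using ae by (simp add: L_rel_iff algebra_simps)
  have "g * a = 0"
  proof (rule meet)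
    show "g * a * e = g * a"
      using ae by (simp add: mult.assoc)
    have "g * (1 - a) * g = g * (1 - a)"
      using ag by (simp add: mult.assoc)
    then show "g * a * g = g * a"
      using gg by (simp add: algebra_simps)
  qed
  then show "L_rel (1 - a) g"
    using ag by (simp add: L_rel_iff algebra_simps)
qed

lemma EL_compl_L_class_split:
  fixes e g :: "'a::ring_1"
  assumes "regular_ring TYPE('a)" "e \<in> idem" "g \<in> idem"
    and "EL_compl (L_class e) (L_class g)"
  obtains a where "a \<in> idem" "L_rel e a" "L_rel (1 - a) g"
proof -
  have meet: "\<forall>z\<in>idem. z * e = z \<and> z * g = z \<longrightarrow> z = 0"
    and join: "\<forall>h\<in>idem. e * h = e \<and> g * h = g \<longrightarrow> h = 1"
    using assms(4) EL_compl_L_class_iff[OF assms(2,3)] by blast+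
  obtain h s t where "h \<in> idem" "e * h = e" "g * h = g" "h = s * e + t * g"
    using regular_ring_idem_join assms(1,2) by blast
  with join have one: "1 - s * e = t * g"
    by (simp add: algebra_simps)
  have ee: "e * e = e" and gg: "g * g = g"
    using assms(2,3) by (simp_all add: idem_def)
  have "s * e * e = s * e" "(1 - s * e) * g = 1 - s * e"
    unfolding one using ee gg by (simp_all add: mult.assoc)
  then show thesis
    using direct_sum_decomposition[OF regular_ring_meet_zero[OF assms(1) meet] ee gg] that
    by blast
qed

lemma EL_compl_one_minus:
  assumes "a \<in> idem" "b \<in> idem" "R_rel a b"
  shows "EL_compl (L_class b) (L_class (1 - a))"
proof -
  have ab: "a * b = b" and ba: "b * a = a"
    using assms(3) by (simp_all add: R_rel_iff)
  have "z = 0" if "z * b = z" "z * (1 - a) = z" for z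
  proof -
    have "z * a = 0"
      using that(2) by (simp add: algebra_simps)
    then show ?thesis
      using that(1) ab by (metis mult.assoc mult_zero_left)
  qed
  moreover have "h = 1" if "b * h = b" "(1 - a) * h = 1 - a" for h
  proof -
    have "(1 - b) * (1 - a) = 1 - b"
      using ba by (simp add: algebra_simps)
    then have "(1 - b) * h = 1 - b"
      using that(2) by (metis mult.assoc)
    then show ?thesis
      using that(1) by (simp add: algebra_simps)
  qed
  ultimately show ?thesis
    by (simp add: EL_compl_L_class_iff[OF assms(2) one_minus_idem[OF assms(1)]])
qed

lemma in_perspective_L_class_iff:
  fixes e f :: "'a::ring_1"
  assumes "regular_ring TYPE('a)" "e \<in> idem" "f \<in> idem"
  shows "in_perspective (L_class e) (L_class f) \<longleftrightarrow>
    (\<exists>a\<in>idem. \<exists>b\<in>idem. L_rel e a \<and> R_rel a b \<and> L_rel b f)"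
proof
  assume "in_perspective (L_class e) (L_class f)"
  then obtain g where g: "g \<in> idem"
    "EL_compl (L_class e) (L_class g)" "EL_compl (L_class f) (L_class g)"
    by (auto simp: in_perspective_def EL_def)
  obtain a where a: "a \<in> idem" "L_rel e a" "L_rel (1 - a) g"
    using EL_compl_L_class_split[OF assms(1,2) g(1,2)] .
  obtain b where b: "b \<in> idem" "L_rel f b" "L_rel (1 - b) g"
    using EL_compl_L_class_split[OF assms(1,3) g(1,3)] .
  have "R_rel a b"
    using a(3) b(3) by (metis L_rel_one_minus_iff L_rel_sym L_rel_trans)
  then show "\<exists>a\<in>idem. \<exists>b\<in>idem. L_rel e a \<and> R_rel a b \<and> L_rel b f"
    using a b by (blast intro: L_rel_sym)
next
  assume "\<exists>a\<in>idem. \<exists>b\<in>idem. L_rel e a \<and> R_rel a b \<and> L_rel b f"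
  then obtain a b where a: "a \<in> idem" "L_rel e a" and b: "b \<in> idem" "L_rel f b"
    and "R_rel a b"
    by (blast intro: L_rel_sym)
  have "EL_compl (L_class a) (L_class (1 - a))" "EL_compl (L_class b) (L_class (1 - a))"
    using EL_compl_one_minus[OF a(1) a(1) R_rel_refl[OF a(1)]]
      EL_compl_one_minus[OF a(1) b(1) \<open>R_rel a b\<close>] by simp_all
  then show "in_perspective (L_class e) (L_class f)"
    unfolding in_perspective_def L_class_eq[OF a(2)] L_class_eq[OF b(2)]
    using L_class_in_EL one_minus_idem a(1) by blast
qed

lemma E_seq_l_mono:
  assumes "E_seq_l e f m" "m \<le> n"
  shows "E_seq_l e f n"
proof -
  obtain x where x: "x 0 = e" "x m = f" "\<forall>i\<le>m. x i \<in> idem"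
    "\<forall>i\<in>{1..m}. L_rel (x (i - 1)) (x i) \<or> R_rel (x (i - 1)) (x i)" "L_rel (x 0) (x 1)"
    and "m \<ge> 1"
    using assms(1) unfolding E_seq_l_def by blast
  define y where "y i = x (min i m)" for i
  have "\<forall>i\<in>{1..n}. L_rel (y (i - 1)) (y i) \<or> R_rel (y (i - 1)) (y i)"
  proof
    fix i assume "i \<in> {1..n}"
    show "L_rel (y (i - 1)) (y i) \<or> R_rel (y (i - 1)) (y i)"
    proof (cases "i \<le> m")
      case True
      then show ?thesis
        using x(4) \<open>i \<in> {1..n}\<close> by (simp add: y_def)
    next
      case False
      then have "y (i - 1) = x m" "y i = x m"
        by (simp_all add: y_def)
      then show ?thesis
        using x(3) by (simp add: L_rel_refl)
    qed
  qed
  then show ?thesis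
    unfolding E_seq_l_def using x \<open>m \<ge> 1\<close> assms(2)
    by (intro conjI exI[of _ y]) (auto simp: y_def min_def)
qed

lemma d_l_bounded_iff:
  assumes "n \<ge> 1"
  shows "1 \<le> d_l e f \<and> d_l e f \<le> n \<longleftrightarrow> E_seq_l e f n"
proof
  assume d: "1 \<le> d_l e f \<and> d_l e f \<le> n"
  then have "\<exists>m. E_seq_l e f m"
    by (auto simp: d_l_def split: if_splits)
  then have "E_seq_l e f (d_l e f)"
    by (simp add: d_l_def LeastI_ex)
  then show "E_seq_l e f n"
    using d E_seq_l_mono by blast
next
  assume n: "E_seq_l e f n"
  then have "E_seq_l e f (d_l e f)" "d_l e f \<le> n"
    by (auto simp: d_l_def intro: LeastI Least_le)
  then show "1 \<le> d_l e f \<and> d_l e f \<le> n"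
    by (simp add: E_seq_l_def)
qed

lemma E_seq_l_3_iff:
  assumes "e \<in> idem" "f \<in> idem"
  shows "E_seq_l e f 3 \<longleftrightarrow> (\<exists>a\<in>idem. \<exists>b\<in>idem. L_rel e a \<and> R_rel a b \<and> L_rel b f)"
proof
  assume "E_seq_l e f 3"
  then obtain x :: "nat \<Rightarrow> 'a" where x: "x 0 = e" "x 3 = f" "\<forall>i\<le>3. x i \<in> idem"
    "\<forall>i\<in>{1..3}. L_rel (x (i - 1)) (x i) \<or> R_rel (x (i - 1)) (x i)" "L_rel (x 0) (x 1)"
    unfolding E_seq_l_def by blast
  have "x 1 \<in> idem" "x 2 \<in> idem"
    using x(3) by auto
  moreover have "L_rel (x 1) (x 2) \<or> R_rel (x 1) (x 2)" "L_rel (x 2) f \<or> R_rel (x 2) f"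
    using x(2) x(4)[rule_format, of 2] x(4)[rule_format, of 3] by simp_all
  ultimately show "\<exists>a\<in>idem. \<exists>b\<in>idem. L_rel e a \<and> R_rel a b \<and> L_rel b f"
    using x(1,5) assms(2) by (meson L_rel_trans R_rel_trans L_rel_refl R_rel_refl)
next
  assume "\<exists>a\<in>idem. \<exists>b\<in>idem. L_rel e a \<and> R_rel a b \<and> L_rel b f"
  then obtain a b where ab: "a \<in> idem" "b \<in> idem" "L_rel e a" "R_rel a b" "L_rel b f"
    by blast
  define x where "x = (\<lambda>i::nat. if i = 0 then e else if i = 1 then a else if i = 2 then b else f)"
  have "\<forall>i\<in>{1..3::nat}. L_rel (x (i - 1)) (x i) \<or> R_rel (x (i - 1)) (x i)"
    using ab by (auto simp: x_def numeral_3_eq_3 le_Suc_eq)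
  then show "E_seq_l e f 3"
    unfolding E_seq_l_def using assms ab
    by (intro conjI exI[of _ x]) (auto simp: x_def)
qed

theorem proposition4p3:
  fixes e f :: "'a::ring_1"
  assumes "regular_ring TYPE('a)"
    and "e \<in> idem" and "f \<in> idem"
  shows "in_perspective (L_class e) (L_class f) \<longleftrightarrow> 1 \<le> d_l e f \<and> d_l e f \<le> 3"
proof -
  have "1 \<le> d_l e f \<and> d_l e f \<le> 3 \<longleftrightarrow> E_seq_l e f 3"
    by (rule d_l_bounded_iff) simp
  then show ?thesis
    using in_perspective_L_class_iff[OF assms] E_seq_l_3_iff[OF assms(2,3)] by simp
qed

end
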